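(* Let $f(x)$ and $g(x)$ be two distinct regular formal power series in $\mathbb{C}[[x]]$ such that $[x^1]f=[x^1]g=1$. Then $\mathrm{ord}(f-g)=\mathrm{ord}(g^{\langle-1\rangle}-f^{\langle-1\rangle})$ and $m(f-g)=m(g^{\langle-1\rangle}-f^{\langle-1\rangle})$, where $f^{\langle-1\rangle}$ and $g^{\langle-1\rangle}$ denote the compositional inverses of $f$ and $g$.
   Context: For a formal power series $f(x)=\sum_{n\ge0}a_nx^n\in\mathbb{C}[[x]]$ and $n\in\mathbb{N}_0=\{0,1,2,\dots\}$, $[x^n]f$ denotes the coefficient $a_n$. A formal power series $f$ is called regular if $[x^0]f=0$ and $[x^1]f\neq0$; every regular $f$ has a unique regular compositional inverse $f^{\langle-1\rangle}$ satisfying $f(f^{\langle-1\rangle}(x))=f^{\langle-1\rangle}(f(x))=x$. For a nonzero formal power series $h$, $\mathrm{ord}(h)$ is the least $n\in\mathbb{N}_0$ with $[x^n]h\neq0$, and $m(h)=[x^{\mathrm{ord}(h)}]h\in\mathbb{C}\setminus\{0\}$. *)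

theory Defs
  imports "HOL-Computational_Algebra.Formal_Power_Series"
begin

abbreviation fps_ord :: "complex fps \<Rightarrow> nat" where
  "fps_ord h \<equiv> subdegree h"

definition fps_lead :: "complex fps \<Rightarrow> complex" where
  "fps_lead h = fps_nth h (subdegree h)"

end

theory Submission
  imports Defs
begin

text \<open>
  Let \<open>G\<close> be the compositional inverse of \<open>g\<close> and \<open>d = fps_inv f - G\<close>. Then
  \<open>(f - g) oo G = (f oo G) - X = - ((f oo (G + d)) - (f oo G))\<close>.
  Composition with a series \<open>G = X + O(X\<^sup>2)\<close> does not change the coefficients of a
  series up to its order, and since \<open>f $ 1 = 1\<close> the difference
  \<open>(f oo (G + d)) - (f oo G)\<close> agrees with \<open>d\<close> up to the order of \<open>d\<close>, because the
  terms \<open>(G + d)\<^sup>i - G\<^sup>i\<close> with \<open>i \<ge> 2\<close> are \<open>d\<close> times a series without constant term.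
  So \<open>f - g\<close> and \<open>-d\<close> have the same order and the same leading coefficient.
\<close>

unbundle fps_syntax

lemma subdegree_eq_if_nth_eq_upto_subdegree:
  fixes a b :: "'a::zero fps"
  assumes "a \<noteq> 0" and "\<And>n. n \<le> subdegree a \<Longrightarrow> b $ n = a $ n"
  shows "subdegree b = subdegree a"
  using assms by (intro subdegreeI) auto

lemma fps_compose_nth_upto_subdegree:
  fixes h G :: "'a::comm_ring_1 fps"
  assumes G0: "G $ 0 = 0" and n: "n \<le> subdegree h"
  shows "(h oo G) $ n = h $ n * (G $ 1) ^ n"
proof -
  have "(h oo G) $ n = (\<Sum>i=0..n. h $ i * (G ^ i) $ n)"
    by (simp add: fps_compose_nth)
  also have "\<dots> = h $ n * (G ^ n) $ n"
  proof (intro sum.mono_neutral_right[where S = "{n}", simplified] ballI)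
    fix i assume "i \<in> {0..n} - {n}"
    with n have "i < subdegree h"
      by auto
    then show "h $ i * (G ^ i) $ n = 0"
      by auto
  qed auto
  finally show ?thesis
    by (simp add: startsby_zero_power_nth_same[OF G0])
qed

lemma fps_mult_nth_upto_subdegree_eq_0:
  fixes d S :: "'a::comm_ring_1 fps"
  assumes "S $ 0 = 0" and "n \<le> subdegree d"
  shows "(d * S) $ n = 0"
proof (cases "S = 0")
  case False
  with assms(1) have "subdegree S > 0"
    by (metis gr0I subdegree_eq_0_iff)
  with assms(2) show ?thesis
    by (intro fps_mult_nth_eq0) simp
qed simp

lemma fps_power_add_diff_nth_upto_subdegree:
  fixes G d :: "'a::comm_ring_1 fps"
  assumes i: "2 \<le> i" and G0: "G $ 0 = 0" and d0: "d $ 0 = 0" and n: "n \<le> subdegree d"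
  shows "((G + d) ^ i - G ^ i) $ n = 0"
proof -
  define S where "S = (\<Sum>m<i. G ^ (i - Suc m) * (G + d) ^ m)"
  have "(G + d) ^ i - G ^ i = d * S"
    unfolding S_def using power_diff_sumr2[of "G + d" i G] by simp
  moreover have "S $ 0 = 0"
  proof -
    have "(G ^ (i - Suc m) * (G + d) ^ m) $ 0 = 0" if "m < i" for m
      using that i G0 d0 by (cases "m = 0") (auto simp: fps_nth_power_0 power_0_left)
    then show ?thesis
      by (simp add: S_def fps_sum_nth)
  qed
  ultimately show ?thesis
    using fps_mult_nth_upto_subdegree_eq_0 n by simp
qed

lemma fps_compose_add_diff_nth_upto_subdegree:
  fixes f G d :: "'a::comm_ring_1 fps"
  assumes G0: "G $ 0 = 0" and d0: "d $ 0 = 0" and n: "n \<le> subdegree d"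
  shows "((f oo (G + d)) - (f oo G)) $ n = f $ 1 * d $ n"
proof -
  have "((f oo (G + d)) - (f oo G)) $ n = (\<Sum>i=0..n. f $ i * ((G + d) ^ i - G ^ i) $ n)"
    by (simp add: fps_compose_nth sum_subtractf right_diff_distrib)
  also have "\<dots> = (\<Sum>i=0..n. if i = 1 then f $ 1 * d $ n else 0)"
  proof (rule sum.cong)
    fix i
    show "f $ i * ((G + d) ^ i - G ^ i) $ n = (if i = 1 then f $ 1 * d $ n else 0)"
      using fps_power_add_diff_nth_upto_subdegree[OF _ G0 d0 n, of i]
      by (cases "i \<le> 1") (auto simp: le_Suc_eq)
  qed simp
  also have "\<dots> = f $ 1 * d $ n"
    using d0 by (cases "n = 0") auto
  finally show ?thesis .
qed

theorem theorem2:
  fixes f g :: "complex fps"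
  assumes "f \<noteq> g"
    and "fps_nth f 0 = 0" and "fps_nth g 0 = 0"
    and "fps_nth f 1 = 1" and "fps_nth g 1 = 1"
  shows "fps_ord (f - g) = fps_ord (fps_inv g - fps_inv f)
    \<and> fps_lead (f - g) = fps_lead (fps_inv g - fps_inv f)"
proof -
  define G where "G = fps_inv g"
  define d where "d = fps_inv f - G"
  have G0: "G $ 0 = 0" and G1: "G $ 1 = 1" and d0: "d $ 0 = 0"
    using assms(5) by (simp_all add: d_def G_def fps_inv_def)
  have "d \<noteq> 0"
    using assms fps_inv_idempotent[of f] fps_inv_idempotent[of g] by (auto simp: d_def G_def)
  have "f - g \<noteq> 0"
    using assms(1) by simp
  have comp: "(f - g) oo G = - ((f oo (G + d)) - (f oo G))"
    using assms fps_inv_right[of f] fps_inv_right[of g]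
    by (simp add: d_def G_def fps_compose_sub_distrib)
  have h_coeffs: "((f - g) oo G) $ n = (f - g) $ n" if "n \<le> subdegree (f - g)" for n
    using fps_compose_nth_upto_subdegree[OF G0 that] G1 by simp
  have d_coeffs: "(- ((f - g) oo G)) $ n = d $ n" if "n \<le> subdegree d" for n
    using fps_compose_add_diff_nth_upto_subdegree[OF G0 d0 that, of f] assms(4) comp by simp
  have "subdegree ((f - g) oo G) = subdegree (f - g)"
    using subdegree_eq_if_nth_eq_upto_subdegree[OF \<open>f - g \<noteq> 0\<close> h_coeffs] .
  moreover have "subdegree (- ((f - g) oo G)) = subdegree d"
    using subdegree_eq_if_nth_eq_upto_subdegree[OF \<open>d \<noteq> 0\<close> d_coeffs] .
  ultimately have ord: "subdegree (f - g) = subdegree d"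
    by simp
  have "(f - g) $ subdegree d = - d $ subdegree d"
    using h_coeffs[of "subdegree d"] d_coeffs[of "subdegree d"] ord
    by (metis fps_neg_nth minus_minus order_refl)
  moreover have "fps_inv g - fps_inv f = - d"
    by (simp add: d_def G_def)
  ultimately show ?thesis
    using ord by (simp add: fps_lead_def)
qed

end
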